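(* Let $(X,\mathsf{d}_X)$ be a compact metric space, $\mathfrak{A}$ a unital C*-algebra, and $\varphi$ a state of $C(X,\mathfrak{A})$. Let $\|\cdot\|_{\mathsf{n}}$ be a norm on $\mathfrak{A}$ (over $\mathbb{R}$ or $\mathbb{C}$) with $M,N>0$ such that $M\|\cdot\|_{\mathsf{n}}\le\|\cdot\|_{\mathfrak{A}}\le N\|\cdot\|_{\mathsf{n}}$. Let $\mathcal{S}$ denote the state space of $C(X,\mathfrak{A})$. Then: (1)(a) if $q=C(X)$, then $\sup_{\mu,\nu\in\mathcal{S}}\mathrm{mk}_{\mathsf{L}^{(\mathsf{n}),q}_{\mathsf{d}_X}}(\mu,\nu)\le 2+N\cdot\mathrm{diam}(X,\mathsf{d}_X)$; (1)(b) if $q=C(X)$ and $\mathfrak{A}=\mathbb{C}$, then $\sup_{\mu,\nu\in\mathcal{S}}\mathrm{mk}_{\mathsf{L}^{(\mathsf{n}),q}_{\mathsf{d}_X}}(\mu,\nu)\le N\cdot\mathrm{diam}(X,\mathsf{d}_X)$; (2) if $q=\mathbb{C}$ or $q=\varphi$, then $\sup_{\mu,\nu\in\mathcal{S}}\mathrm{mk}_{\mathsf{L}^{(\mathsf{n}),q}_{\mathsf{d}_X}}(\mu,\nu)\le 2$.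
   Context: $C(X,\mathfrak{A})$ is the unital C*-algebra of continuous $\mathfrak{A}$-valued functions on $X$ (pointwise operations, supremum norm, unit constant $1_{\mathfrak{A}}$); $C(X,\mathbb{C}1_{\mathfrak{A}})$ is the subalgebra of functions with values in $\mathbb{C}1_{\mathfrak{A}}$. For $a\in C(X,\mathfrak{A})$, $l^{(\mathsf{n})}_{\mathsf{d}_X}(a)=\sup_{x\ne y}\|a(x)-a(y)\|_{\mathsf{n}}/\mathsf{d}_X(x,y)$; $\mathsf{L}^{(\mathsf{n}),C(X)}_{\mathsf{d}_X}(a)=\max\{l^{(\mathsf{n})}_{\mathsf{d}_X}(a),\inf_{b\in C(X,\mathbb{C}1_{\mathfrak{A}})}\|a-b\|\}$, $\mathsf{L}^{(\mathsf{n}),\mathbb{C}}_{\mathsf{d}_X}(a)=\max\{l^{(\mathsf{n})}_{\mathsf{d}_X}(a),\inf_{\lambda\in\mathbb{C}}\|a-\lambda1\|\}$, $\mathsf{L}^{(\mathsf{n}),\varphi}_{\mathsf{d}_X}(a)=\max\{l^{(\mathsf{n})}_{\mathsf{d}_X}(a),\|a-\varphi(a)1\|\}$ (supremum norms). For a seminorm $\mathsf{L}$ and states $\mu,\nu$, $\mathrm{mk}_{\mathsf{L}}(\mu,\nu)=\sup\{|\mu(a)-\nu(a)|: a=a^*,\ \mathsf{L}(a)\le1\}$. $\mathrm{diam}(X,\mathsf{d}_X)=\sup_{x,y}\mathsf{d}_X(x,y)$. *)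

theory Defs
  imports "HOL-Analysis.Analysis"
begin

class cstar_algebra = real_normed_algebra_1 + banach +
  fixes cscale :: "complex \<Rightarrow> 'a \<Rightarrow> 'a"
    and star :: "'a \<Rightarrow> 'a"
  assumes cscale_add_left: "cscale (a + b) x = cscale a x + cscale b x"
    and cscale_add_right: "cscale a (x + y) = cscale a x + cscale a y"
    and cscale_cscale: "cscale a (cscale b x) = cscale (a * b) x"
    and cscale_one: "cscale 1 x = x"
    and cscale_of_real: "cscale (complex_of_real r) x = scaleR r x"
    and cscale_mult_left: "cscale a x * y = cscale a (x * y)"
    and cscale_mult_right: "x * cscale a y = cscale a (x * y)"
    and norm_cscale: "norm (cscale a x) = cmod a * norm x"
    and star_star: "star (star x) = x"
    and star_add: "star (x + y) = star x + star y"
    and star_cscale: "star (cscale a x) = cscale (cnj a) (star x)"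
    and star_mult: "star (x * y) = star y * star x"
    and cstar_identity: "norm (star x * x) = (norm x)\<^sup>2"

section \<open>The algebra C(X, A) for a compact metric space X (the whole type 'x)\<close>

definition supnorm :: "('x::metric_space \<Rightarrow> 'a::cstar_algebra) \<Rightarrow> real" where
  "supnorm f = (SUP x. norm (f x))"

definition fstar :: "('x \<Rightarrow> 'a::cstar_algebra) \<Rightarrow> 'x \<Rightarrow> 'a" where
  "fstar f = (\<lambda>x. star (f x))"

definition fcscale :: "complex \<Rightarrow> ('x \<Rightarrow> 'a::cstar_algebra) \<Rightarrow> 'x \<Rightarrow> 'a" where
  "fcscale c f = (\<lambda>x. cscale c (f x))"

definition is_state :: "(('x::metric_space \<Rightarrow> 'a::cstar_algebra) \<Rightarrow> complex) \<Rightarrow> bool" where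
  "is_state \<phi> \<longleftrightarrow>
     (\<forall>f g. continuous_on UNIV f \<longrightarrow> continuous_on UNIV g \<longrightarrow> \<phi> (\<lambda>x. f x + g x) = \<phi> f + \<phi> g) \<and>
     (\<forall>c f. continuous_on UNIV f \<longrightarrow> \<phi> (fcscale c f) = c * \<phi> f) \<and>
     (\<forall>g. continuous_on UNIV g \<longrightarrow>
          Im (\<phi> (\<lambda>x. star (g x) * g x)) = 0 \<and> Re (\<phi> (\<lambda>x. star (g x) * g x)) \<ge> 0) \<and>
     \<phi> (\<lambda>x. 1) = 1"

definition lip_n :: "('a \<Rightarrow> real) \<Rightarrow> ('x::metric_space \<Rightarrow> 'a::cstar_algebra) \<Rightarrow> ereal" where
  "lip_n nn a = (SUP p \<in> {(x, y). x \<noteq> y}. ereal (nn (a (fst p) - a (snd p)) / dist (fst p) (snd p)))"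

definition scalar_fun_set :: "('x::metric_space \<Rightarrow> 'a::cstar_algebra) set" where
  "scalar_fun_set = {b. continuous_on UNIV b \<and> (\<forall>x. b x \<in> range (\<lambda>c. cscale c 1))}"

definition L_CX :: "('a \<Rightarrow> real) \<Rightarrow> ('x::metric_space \<Rightarrow> 'a::cstar_algebra) \<Rightarrow> ereal" where
  "L_CX nn a = max (lip_n nn a) (ereal (Inf ((\<lambda>b. supnorm (\<lambda>x. a x - b x)) ` scalar_fun_set)))"

definition L_C :: "('a \<Rightarrow> real) \<Rightarrow> ('x::metric_space \<Rightarrow> 'a::cstar_algebra) \<Rightarrow> ereal" where
  "L_C nn a = max (lip_n nn a) (ereal (Inf ((\<lambda>c. supnorm (\<lambda>x. a x - cscale c 1)) ` UNIV)))"

definition L_phi :: "('a \<Rightarrow> real) \<Rightarrow> (('x::metric_space \<Rightarrow> 'a) \<Rightarrow> complex)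
    \<Rightarrow> ('x \<Rightarrow> 'a::cstar_algebra) \<Rightarrow> ereal" where
  "L_phi nn \<phi> a = max (lip_n nn a) (ereal (supnorm (\<lambda>x. a x - cscale (\<phi> a) 1)))"

definition mk :: "(('x::metric_space \<Rightarrow> 'a::cstar_algebra) \<Rightarrow> ereal)
    \<Rightarrow> (('x \<Rightarrow> 'a) \<Rightarrow> complex) \<Rightarrow> (('x \<Rightarrow> 'a) \<Rightarrow> complex) \<Rightarrow> ereal" where
  "mk L \<mu> \<nu> = (SUP a \<in> {a. continuous_on UNIV a \<and> fstar a = a \<and> L a \<le> 1}.
                  ereal (cmod (\<mu> a - \<nu> a)))"

text \<open>A norm on A (over the reals; a complex norm is in particular a real norm).\<close>

definition is_norm_on :: "('a::real_vector \<Rightarrow> real) \<Rightarrow> bool" where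
  "is_norm_on nn \<longleftrightarrow> (\<forall>x. nn x \<ge> 0) \<and> (\<forall>x. nn x = 0 \<longleftrightarrow> x = 0) \<and>
     (\<forall>x y. nn (x + y) \<le> nn x + nn y) \<and> (\<forall>r x. nn (scaleR r x) = \<bar>r\<bar> * nn x)"

definition diam_X :: "'x::metric_space itself \<Rightarrow> real" where
  "diam_X _ = (SUP p \<in> (UNIV :: ('x \<times> 'x) set). dist (fst p) (snd p))"

end

theory Submission
  imports Defs "HOL-Computational_Algebra.Formal_Power_Series"
begin

text \<open>Scalars stand for multiples of the unit. Positivity of a state \<mu> is only assumed on
elements g* g. If h is self-adjoint with \<parallel>R - h\<parallel> \<le> R, then for every \<delta> > 0 the element h + \<delta>
is such a square: g is a multiple of the binomial series of the square root, which converges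
because \<parallel>1 - (h + \<delta>)/(R + \<delta>)\<parallel> < 1. Hence \<mu> maps every self-adjoint a with \<parallel>a(x) - s\<parallel> \<le> r
for all x into the real interval [s - r, s + r].

If moreover \<parallel>a(x) - t(x)\<parallel> \<le> \<rho> for a real continuous t with maximum M = t(x_M), and
\<parallel>a(x) - a(y)\<parallel> \<le> K, the centre (min t + M)/2 shows \<mu> a \<le> M + \<rho> and the centre M shows
\<mu> a \<ge> M - \<rho> - K; so two states differ on a by at most 2\<rho> + K. Replacing a scalar function
by its real part only improves the approximation of a self-adjoint a, the Lipschitz bound gives
K = N diam X, and the Monge-Kantorovich bounds follow by passing to the infimum over approximants.\<close>

definition sqrt_series :: "'a::{real_normed_algebra_1,banach} \<Rightarrow> 'a" where
  "sqrt_series v = (\<Sum>n. ((1/2::real) gchoose n) *\<^sub>R (v - 1) ^ n)"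

lemma gbinomial_half_convolution:
  "(\<Sum>i\<le>n. ((1/2::real) gchoose i) * ((1/2) gchoose (n - i))) = (if n \<le> 1 then 1 else 0)"
proof -
  have "(\<Sum>i\<le>n. ((1/2::real) gchoose i) * ((1/2) gchoose (n - i))) = (1::real) gchoose n"
    using gbinomial_Vandermonde[of "1/2::real" "1/2" n] by (simp add: atMost_atLeast0)
  also have "\<dots> = of_nat (1 choose n)"
    by (metis binomial_gbinomial of_nat_1)
  also have "\<dots> = (if n \<le> 1 then 1 else 0)"
    by (cases n) (auto simp: binomial_eq_0)
  finally show ?thesis .
qed

lemma summable_gbinomial_half_powers:
  assumes "0 \<le> q" "q < 1"
  shows "summable (\<lambda>n. \<bar>(1/2::real) gchoose n\<bar> * q ^ n)"
proof -
  define z where "z = (q + 1) / 2"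
  have "summable (\<lambda>n. ((1/2::real) gchoose n) * z ^ n)"
    using gen_binomial_real[of z "1/2"] assms sums_summable by (fastforce simp: z_def)
  then have "summable (\<lambda>n. norm (((1/2::real) gchoose n) * q ^ n))"
    by (rule powser_insidea) (use assms in \<open>auto simp: z_def\<close>)
  then show ?thesis
    by (simp add: abs_mult power_abs assms)
qed

lemma norm_scaleR_power_le:
  fixes w :: "'a::real_normed_algebra_1"
  assumes "norm w \<le> q"
  shows "norm (c *\<^sub>R w ^ n) \<le> \<bar>c\<bar> * q ^ n"
proof -
  have "norm (w ^ n) \<le> q ^ n"
    using norm_power_ineq[of w n] power_mono[OF assms, of n] by simp
  then show ?thesis
    by (simp add: mult_left_mono)
qed

lemma summable_norm_sqrt_series:
  fixes v :: "'a::{real_normed_algebra_1,banach}"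
  assumes "norm (v - 1) \<le> q" "q < 1"
  shows "summable (\<lambda>n. norm (((1/2::real) gchoose n) *\<^sub>R (v - 1) ^ n))"
proof (rule summable_comparison_test')
  show "summable (\<lambda>n. \<bar>(1/2::real) gchoose n\<bar> * q ^ n)"
    using assms norm_ge_zero order_trans by (blast intro: summable_gbinomial_half_powers)
  show "norm (norm (((1/2::real) gchoose n) *\<^sub>R (v - 1) ^ n)) \<le> \<bar>(1/2::real) gchoose n\<bar> * q ^ n" for n
    using norm_scaleR_power_le[OF assms(1)] by simp
qed

lemma sqrt_series_square:
  fixes v :: "'a::{real_normed_algebra_1,banach}"
  assumes "norm (v - 1) < 1"
  shows "sqrt_series v * sqrt_series v = v"
proof -
  define c where "c n = (1/2::real) gchoose n" for n
  define u where "u = v - 1"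
  have s: "summable (\<lambda>n. norm (c n *\<^sub>R u ^ n))"
    using summable_norm_sqrt_series[of v "norm (v - 1)"] assms by (simp add: c_def u_def)
  have product_term: "(c i *\<^sub>R u ^ i) * (c (k - i) *\<^sub>R u ^ (k - i)) = (c i * c (k - i)) *\<^sub>R u ^ k"
    if "i \<in> {..k}" for i k
    using that by (simp add: power_add[symmetric])
  have "sqrt_series v * sqrt_series v = (\<Sum>k. \<Sum>i\<le>k. (c i *\<^sub>R u ^ i) * (c (k - i) *\<^sub>R u ^ (k - i)))"
    unfolding sqrt_series_def c_def[symmetric] u_def[symmetric] by (rule Cauchy_product[OF s s])
  also have "\<dots> = (\<Sum>k. (\<Sum>i\<le>k. c i * c (k - i)) *\<^sub>R u ^ k)"
    unfolding scaleR_sum_left by (simp only: sum.cong[OF refl product_term])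
  also have "\<dots> = (\<Sum>k\<in>{0,1}. (\<Sum>i\<le>k. c i * c (k - i)) *\<^sub>R u ^ k)"
    by (rule suminf_finite) (auto simp: c_def gbinomial_half_convolution)
  also have "\<dots> = v"
    by (simp add: c_def u_def gbinomial_half_convolution)
  finally show ?thesis .
qed

lemma continuous_on_sqrt_series:
  fixes f :: "'b::topological_space \<Rightarrow> 'a::{real_normed_algebra_1,banach}"
  assumes "continuous_on S f" "\<And>x. x \<in> S \<Longrightarrow> norm (f x - 1) \<le> q" "q < 1"
  shows "continuous_on S (\<lambda>x. sqrt_series (f x))"
proof (cases "S = {}")
  case False
  then have "0 \<le> q"
    using assms(2) norm_ge_zero order_trans by blast
  have "uniform_limit S (\<lambda>n x. \<Sum>i<n. ((1/2::real) gchoose i) *\<^sub>R (f x - 1) ^ i)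
      (\<lambda>x. \<Sum>i. ((1/2::real) gchoose i) *\<^sub>R (f x - 1) ^ i) sequentially"
    by (rule Weierstrass_m_test[OF norm_scaleR_power_le[OF assms(2)]
          summable_gbinomial_half_powers[OF \<open>0 \<le> q\<close> assms(3)]])
  then show ?thesis
    unfolding sqrt_series_def
    by (rule uniform_limit_theorem[rotated])
       (auto intro!: always_eventually continuous_intros assms(1))
qed simp

lemma star_scaleR: "star (r *\<^sub>R x) = r *\<^sub>R star (x::'a::cstar_algebra)"
  using star_cscale[of "complex_of_real r" x] by (simp add: cscale_of_real[symmetric])

lemma star_diff: "star (x - y) = star x - star (y::'a::cstar_algebra)"
  using star_add[of x "- y"] star_scaleR[of "-1" y] by simp

lemma star_one: "star (1::'a::cstar_algebra) = 1"
  by (metis mult_1_left star_mult star_star)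

lemma star_power: "star (x ^ n) = star (x::'a::cstar_algebra) ^ n"
  by (induction n) (simp_all add: star_one star_mult power_commutes)

lemma norm_star_le: "norm (x::'a::cstar_algebra) \<le> norm (star x)"
proof (cases "x = 0")
  case False
  have "norm x * norm x \<le> norm (star x) * norm x"
    using cstar_identity[of x] norm_mult_ineq[of "star x" x] by (simp add: power2_eq_square)
  then show ?thesis
    using False by simp
qed simp

lemma norm_star: "norm (star x) = norm (x::'a::cstar_algebra)"
  using norm_star_le[of x] norm_star_le[of "star x"] by (simp add: star_star)

lemma bounded_linear_star: "bounded_linear (star :: 'a::cstar_algebra \<Rightarrow> 'a)"
  by (rule bounded_linear_intro[where K=1]) (auto simp: star_add star_scaleR norm_star)

lemma star_sqrt_series:
  fixes v :: "'a::cstar_algebra"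
  assumes "star v = v" "norm (v - 1) < 1"
  shows "star (sqrt_series v) = sqrt_series v"
proof -
  have "summable (\<lambda>n. ((1/2::real) gchoose n) *\<^sub>R (v - 1) ^ n)"
    using summable_norm_sqrt_series[of v "norm (v - 1)"] assms(2) by (simp add: summable_norm_cancel)
  then have "star (sqrt_series v) = (\<Sum>n. star (((1/2::real) gchoose n) *\<^sub>R (v - 1) ^ n))"
    unfolding sqrt_series_def by (rule bounded_linear.suminf[OF bounded_linear_star])
  also have "\<dots> = sqrt_series v"
    by (simp add: sqrt_series_def star_scaleR star_power star_diff star_one assms(1))
  finally show ?thesis .
qed

lemma norm_diff_Re_scalar_le:
  fixes v :: "'a::cstar_algebra"
  assumes "star v = v"
  shows "norm (v - Re c *\<^sub>R 1) \<le> norm (v - cscale c 1)"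
proof -
  define u where "u = v - cscale c 1"
  have "cscale c 1 + cscale (cnj c) 1 = (2 * Re c) *\<^sub>R (1::'a)"
    by (simp only: cscale_add_left[symmetric] complex_add_cnj cscale_of_real)
  then have "u + star u = 2 *\<^sub>R (v - Re c *\<^sub>R 1)"
    by (simp add: u_def star_diff star_cscale star_one assms algebra_simps scaleR_2)
  then have "v - Re c *\<^sub>R 1 = (1/2) *\<^sub>R (u + star u)"
    by simp
  also have "norm \<dots> \<le> (1/2) * (norm u + norm (star u))"
    using norm_triangle_ineq[of u "star u"] by simp
  also have "\<dots> = norm u"
    by (simp add: norm_star)
  finally show ?thesis
    unfolding u_def .
qed

lemma state_add:
  fixes \<mu> :: "('x::metric_space \<Rightarrow> 'a::cstar_algebra) \<Rightarrow> complex"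
  assumes "is_state \<mu>" "continuous_on UNIV f" "continuous_on UNIV g"
  shows "\<mu> (\<lambda>x. f x + g x) = \<mu> f + \<mu> g"
  using assms unfolding is_state_def by blast

lemma state_diff:
  fixes \<mu> :: "('x::metric_space \<Rightarrow> 'a::cstar_algebra) \<Rightarrow> complex"
  assumes st: "is_state \<mu>" and "continuous_on UNIV f" "continuous_on UNIV g"
  shows "\<mu> (\<lambda>x. f x - g x) = \<mu> f - \<mu> g"
proof -
  have "cscale (-1) v = - v" for v :: 'a
    using cscale_of_real[of "-1" v] by simp
  then have "fcscale (-1) g = (\<lambda>x. - g x)"
    by (simp add: fcscale_def)
  then have "\<mu> (\<lambda>x. - g x) = - \<mu> g"
    using st assms(3) unfolding is_state_def by (metis mult_minus1)
  moreover have "\<mu> (\<lambda>x. f x + - g x) = \<mu> f + \<mu> (\<lambda>x. - g x)"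
    using assms by (intro state_add continuous_intros)
  ultimately show ?thesis
    by simp
qed

lemma state_scalar:
  fixes \<mu> :: "('x::metric_space \<Rightarrow> 'a::cstar_algebra) \<Rightarrow> complex"
  assumes "is_state \<mu>"
  shows "\<mu> (\<lambda>x. cscale c 1) = c"
proof -
  have "\<mu> (fcscale c (\<lambda>x. 1)) = c * \<mu> (\<lambda>x. 1)"
    using assms unfolding is_state_def by (simp only: continuous_on_const simp_thms)
  then show ?thesis
    using assms by (simp add: is_state_def fcscale_def)
qed

lemma state_scaleR_one:
  fixes \<mu> :: "('x::metric_space \<Rightarrow> 'a::cstar_algebra) \<Rightarrow> complex"
  assumes "is_state \<mu>"
  shows "\<mu> (\<lambda>x. r *\<^sub>R 1) = complex_of_real r"
  using state_scalar[OF assms, of "complex_of_real r"] by (simp add: cscale_of_real)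

lemma continuous_sqrt_add_scalar:
  fixes k :: "'b::topological_space \<Rightarrow> 'a::cstar_algebra"
  assumes ck: "continuous_on S k" and sk: "\<And>x. star (k x) = k x"
    and nk: "\<And>x. norm (R *\<^sub>R 1 - k x) \<le> R" and \<delta>: "0 < \<delta>"
  obtains g where "continuous_on S g" "\<And>x. star (g x) * g x = k x + \<delta> *\<^sub>R 1"
proof -
  have R\<delta>: "0 < R + \<delta>"
    using nk[of undefined] norm_ge_zero[of "R *\<^sub>R 1 - k undefined"] \<delta> by linarith
  define u where "u x = (1 / (R + \<delta>)) *\<^sub>R (k x + \<delta> *\<^sub>R 1)" for x
  have scaled_u: "(R + \<delta>) *\<^sub>R u x = k x + \<delta> *\<^sub>R 1" for x
    using R\<delta> by (simp add: u_def)
  have "(R + \<delta>) * norm (u x - 1) = norm (k x - R *\<^sub>R 1)" for x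
  proof -
    have "(R + \<delta>) *\<^sub>R (u x - 1) = k x - R *\<^sub>R 1"
      by (simp only: scaleR_diff_right scaled_u) (simp add: algebra_simps)
    then show ?thesis
      using R\<delta> by (metis abs_of_pos norm_scaleR)
  qed
  then have nu: "norm (u x - 1) \<le> R / (R + \<delta>)" for x
    using nk[of x] R\<delta> by (simp add: norm_minus_commute le_divide_eq mult.commute)
  have q: "R / (R + \<delta>) < 1"
    using R\<delta> \<delta> by simp
  have su: "star (u x) = u x" for x
    by (simp add: u_def star_add star_scaleR star_one sk)
  define g where "g x = sqrt (R + \<delta>) *\<^sub>R sqrt_series (u x)" for x
  have "continuous_on S u"
    unfolding u_def using ck by (intro continuous_intros)
  then have "continuous_on S g"
    unfolding g_def using nu q by (intro continuous_intros continuous_on_sqrt_series)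
  moreover have "star (g x) * g x = k x + \<delta> *\<^sub>R 1" for x
  proof -
    have "star (g x) * g x = (R + \<delta>) *\<^sub>R (sqrt_series (u x) * sqrt_series (u x))"
      using star_sqrt_series[OF su order_le_less_trans[OF nu q]] R\<delta>
      by (simp add: g_def star_scaleR)
    also have "\<dots> = (R + \<delta>) *\<^sub>R u x"
      using sqrt_series_square[OF order_le_less_trans[OF nu q]] by simp
    finally show ?thesis
      by (simp only: scaled_u)
  qed
  ultimately show ?thesis
    using that by blast
qed

lemma state_nonneg:
  fixes \<mu> :: "('x::metric_space \<Rightarrow> 'a::cstar_algebra) \<Rightarrow> complex"
  assumes st: "is_state \<mu>" and ck: "continuous_on UNIV k" and sk: "\<And>x. star (k x) = k x"
    and nk: "\<And>x. norm (R *\<^sub>R 1 - k x) \<le> R"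
  shows "Im (\<mu> k) = 0 \<and> 0 \<le> Re (\<mu> k)"
proof -
  have shifted: "Im (\<mu> k) = 0 \<and> - \<delta> \<le> Re (\<mu> k)" if \<delta>: "0 < \<delta>" for \<delta>
  proof -
    obtain g where cg: "continuous_on UNIV g" and g: "\<And>x. star (g x) * g x = k x + \<delta> *\<^sub>R 1"
      using continuous_sqrt_add_scalar[OF ck sk nk \<delta>] by blast
    have "\<mu> (\<lambda>x. star (g x) * g x) = \<mu> k + complex_of_real \<delta>"
      using ck by (simp add: g state_add[OF st] state_scaleR_one[OF st])
    moreover have "Im (\<mu> (\<lambda>x. star (g x) * g x)) = 0 \<and> 0 \<le> Re (\<mu> (\<lambda>x. star (g x) * g x))"
      using st cg unfolding is_state_def by blast
    ultimately show ?thesis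
      by simp
  qed
  have "0 \<le> Re (\<mu> k)"
  proof (rule field_le_epsilon)
    show "0 \<le> Re (\<mu> k) + \<delta>" if "0 < \<delta>" for \<delta>
      using shifted[OF that] by simp
  qed
  then show ?thesis
    using shifted[of 1] by simp
qed

lemma state_near_scalar:
  fixes \<mu> :: "('x::metric_space \<Rightarrow> 'a::cstar_algebra) \<Rightarrow> complex"
  assumes st: "is_state \<mu>" and ca: "continuous_on UNIV a" and sa: "\<And>x. star (a x) = a x"
    and near: "\<And>x. norm (a x - s *\<^sub>R 1) \<le> r"
  shows "Im (\<mu> a) = 0 \<and> \<bar>Re (\<mu> a) - s\<bar> \<le> r"
proof -
  have "Im (\<mu> (\<lambda>x. a x - (s - r) *\<^sub>R 1)) = 0 \<and> 0 \<le> Re (\<mu> (\<lambda>x. a x - (s - r) *\<^sub>R 1))"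
  proof (rule state_nonneg[OF st])
    show "norm (r *\<^sub>R 1 - (a x - (s - r) *\<^sub>R 1)) \<le> r" for x
      using near[of x] by (simp add: norm_minus_commute algebra_simps)
  qed (auto intro!: continuous_intros ca simp: star_diff star_scaleR star_one sa)
  moreover have "Im (\<mu> (\<lambda>x. (s + r) *\<^sub>R 1 - a x)) = 0 \<and> 0 \<le> Re (\<mu> (\<lambda>x. (s + r) *\<^sub>R 1 - a x))"
  proof (rule state_nonneg[OF st])
    show "norm (r *\<^sub>R 1 - ((s + r) *\<^sub>R 1 - a x)) \<le> r" for x
      using near[of x] by (simp add: algebra_simps)
  qed (auto intro!: continuous_intros ca simp: star_diff star_scaleR star_one sa)
  ultimately show ?thesis
    using ca by (simp add: state_diff[OF st] state_scaleR_one[OF st] abs_le_iff)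
qed

lemma norm_diff_scaleR_one_le:
  fixes v :: "'a::real_normed_algebra_1"
  shows "norm (v - c *\<^sub>R 1) \<le> norm (v - d *\<^sub>R 1) + \<bar>d - c\<bar>"
proof -
  have "v - c *\<^sub>R 1 = (v - d *\<^sub>R 1) + (d - c) *\<^sub>R 1"
    by (simp add: algebra_simps)
  then show ?thesis
    by (metis norm_scaleR norm_one mult.right_neutral norm_triangle_ineq)
qed

lemma state_diff_le_of_real_approx:
  fixes \<mu> \<nu> :: "('x::metric_space \<Rightarrow> 'a::cstar_algebra) \<Rightarrow> complex"
  assumes cpt: "compact (UNIV :: 'x set)" and st: "is_state \<mu>" "is_state \<nu>"
    and ca: "continuous_on UNIV a" and sa: "\<And>x. star (a x) = a x"
    and ct: "continuous_on UNIV t" and near: "\<And>x. norm (a x - t x *\<^sub>R 1) \<le> \<rho>"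
    and osc: "\<And>x y. norm (a x - a y) \<le> K"
  shows "cmod (\<mu> a - \<nu> a) \<le> 2 * \<rho> + K"
proof -
  obtain xM where xM: "\<And>y. t y \<le> t xM"
    using continuous_attains_sup[OF cpt _ ct] by auto
  obtain xm where xm: "\<And>y. t xm \<le> t y"
    using continuous_attains_inf[OF cpt _ ct] by auto
  have bounds: "Im (\<sigma> a) = 0 \<and> t xM - \<rho> - K \<le> Re (\<sigma> a) \<and> Re (\<sigma> a) \<le> t xM + \<rho>"
    if "is_state \<sigma>" for \<sigma> :: "('x \<Rightarrow> 'a) \<Rightarrow> complex"
  proof -
    have "\<bar>Re (\<sigma> a) - (t xm + t xM) / 2\<bar> \<le> \<rho> + (t xM - t xm) / 2"
    proof (rule conjunct2[OF state_near_scalar[OF that ca sa]])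
      fix x
      have "\<bar>t x - (t xm + t xM) / 2\<bar> \<le> (t xM - t xm) / 2"
        unfolding abs_le_iff using xm[of x] xM[of x] by argo
      then show "norm (a x - ((t xm + t xM) / 2) *\<^sub>R 1) \<le> \<rho> + (t xM - t xm) / 2"
        using norm_diff_scaleR_one_le[of "a x" "(t xm + t xM) / 2" "t x"] near[of x] by linarith
    qed
    moreover have "Im (\<sigma> a) = 0 \<and> \<bar>Re (\<sigma> a) - t xM\<bar> \<le> \<rho> + K"
    proof (rule state_near_scalar[OF that ca sa])
      show "norm (a x - t xM *\<^sub>R 1) \<le> \<rho> + K" for x
        using norm_triangle_ineq[of "a x - a xM" "a xM - t xM *\<^sub>R 1"] near[of xM] osc[of x xM]
        by simp
    qed
    ultimately show ?thesis
      unfolding abs_le_iff by argo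
  qed
  have "\<mu> a - \<nu> a = complex_of_real (Re (\<mu> a) - Re (\<nu> a))"
    using bounds[OF st(1)] bounds[OF st(2)] by (simp add: complex_eq_iff)
  then show ?thesis
    using bounds[OF st(1)] bounds[OF st(2)] by (simp only: norm_of_real) linarith
qed

lemma continuous_on_dist_dominated:
  fixes f :: "'a::metric_space \<Rightarrow> 'b::metric_space" and g :: "'a \<Rightarrow> 'c::metric_space"
  assumes "continuous_on S f" "\<And>x y. x \<in> S \<Longrightarrow> y \<in> S \<Longrightarrow> dist (g x) (g y) \<le> dist (f x) (f y)"
  shows "continuous_on S g"
  unfolding continuous_on_iff
proof (intro ballI allI impI)
  fix x e assume "x \<in> S" "0 < (e::real)"
  then obtain d where "0 < d" "\<forall>y\<in>S. dist y x < d \<longrightarrow> dist (f y) (f x) < e"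
    using assms(1) unfolding continuous_on_iff by blast
  moreover have "dist (g y) (g x) \<le> dist (f y) (f x)" if "y \<in> S" for y
    using assms(2) that \<open>x \<in> S\<close> .
  ultimately show "\<exists>d>0. \<forall>y\<in>S. dist y x < d \<longrightarrow> dist (g y) (g x) < e"
    by force
qed

lemma state_diff_le_of_scalar_approx:
  fixes \<mu> \<nu> :: "('x::metric_space \<Rightarrow> 'a::cstar_algebra) \<Rightarrow> complex"
  assumes cpt: "compact (UNIV :: 'x set)" and st: "is_state \<mu>" "is_state \<nu>"
    and ca: "continuous_on UNIV a" and sa: "\<And>x. star (a x) = a x"
    and b: "b \<in> scalar_fun_set" and near: "\<And>x. norm (a x - b x) \<le> \<rho>"
    and osc: "\<And>x y. norm (a x - a y) \<le> K"
  shows "cmod (\<mu> a - \<nu> a) \<le> 2 * \<rho> + K"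
proof -
  have "\<forall>x. \<exists>c. b x = cscale c 1"
    using b by (auto simp: scalar_fun_set_def)
  then obtain \<beta> where \<beta>: "\<And>x. b x = cscale (\<beta> x) 1"
    by metis
  have cb: "continuous_on UNIV b"
    using b by (simp add: scalar_fun_set_def)
  have dominated: "dist (Re (\<beta> x)) (Re (\<beta> y)) \<le> dist (b x) (b y)" for x y
  proof -
    have "b x - b y = cscale (\<beta> x - \<beta> y) 1"
      using cscale_add_left[of "\<beta> x - \<beta> y" "\<beta> y" 1] by (simp add: \<beta> diff_eq_eq)
    then show ?thesis
      using abs_Re_le_cmod[of "\<beta> x - \<beta> y"] by (simp add: dist_norm norm_cscale)
  qed
  have "continuous_on UNIV (\<lambda>x. Re (\<beta> x))"
    by (rule continuous_on_dist_dominated[OF cb dominated])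
  moreover have "norm (a x - Re (\<beta> x) *\<^sub>R 1) \<le> \<rho>" for x
    using order_trans[OF norm_diff_Re_scalar_le[OF sa] near[of x, unfolded \<beta>]] .
  ultimately show ?thesis
    by (rule state_diff_le_of_real_approx[OF cpt st ca sa _ _ osc])
qed

lemma state_diff_le_of_near_scalar:
  fixes \<mu> \<nu> :: "('x::metric_space \<Rightarrow> 'a::cstar_algebra) \<Rightarrow> complex"
  assumes st: "is_state \<mu>" "is_state \<nu>"
    and ca: "continuous_on UNIV a" and sa: "\<And>x. star (a x) = a x"
    and near: "\<And>x. norm (a x - cscale c 1) \<le> \<rho>"
  shows "cmod (\<mu> a - \<nu> a) \<le> 2 * \<rho>"
proof -
  have "norm (a x - Re c *\<^sub>R 1) \<le> \<rho>" for x
    using order_trans[OF norm_diff_Re_scalar_le[OF sa] near[of x]] .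
  then have "Im (\<sigma> a) = 0 \<and> \<bar>Re (\<sigma> a) - Re c\<bar> \<le> \<rho>" if "is_state \<sigma>" for \<sigma>
    using state_near_scalar[OF that ca sa] by blast
  from this[OF st(1)] this[OF st(2)]
  have "\<mu> a - \<nu> a = complex_of_real (Re (\<mu> a) - Re (\<nu> a))"
    and "\<bar>Re (\<mu> a) - Re (\<nu> a)\<bar> \<le> 2 * \<rho>"
    by (simp_all add: complex_eq_iff) (unfold abs_le_iff, argo)
  then show ?thesis
    by (simp only: norm_of_real)
qed

lemma norm_le_supnorm:
  fixes f :: "'x::metric_space \<Rightarrow> 'a::cstar_algebra"
  assumes "compact (UNIV :: 'x set)" "continuous_on UNIV f"
  shows "norm (f x) \<le> supnorm f"
proof -
  have "bounded (range f)"
    using assms compact_continuous_image compact_imp_bounded by blast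
  then have "bdd_above (range (\<lambda>x. norm (f x)))"
    by (auto simp: bounded_iff intro: bdd_aboveI)
  then show ?thesis
    unfolding supnorm_def by (rule cSUP_upper[OF UNIV_I])
qed

lemma dist_le_diam_X:
  assumes "compact (UNIV :: 'x::metric_space set)"
  shows "dist (x::'x) y \<le> diam_X TYPE('x)"
proof -
  obtain e where "\<And>x y::'x. dist x y \<le> e"
    using compact_imp_bounded[OF assms] unfolding bounded_two_points by blast
  then have "bdd_above (range (\<lambda>p::'x \<times> 'x. dist (fst p) (snd p)))"
    by (intro bdd_aboveI[where M = e]) auto
  then show ?thesis
    unfolding diam_X_def using cSUP_upper[OF UNIV_I, of _ "(x, y)"] by fastforce
qed

lemma norm_diff_le_of_lip_n:
  fixes a :: "'x::metric_space \<Rightarrow> 'a::cstar_algebra"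
  assumes cpt: "compact (UNIV :: 'x set)" and lip: "lip_n nn a \<le> 1"
    and N: "\<And>v. norm v \<le> N * nn v" "0 \<le> N"
  shows "norm (a x - a y) \<le> N * diam_X TYPE('x)"
proof (cases "x = y")
  case True
  then show ?thesis
    using dist_le_diam_X[OF cpt, of x x] N(2) by simp
next
  case False
  have "(x, y) \<in> {(x, y). x \<noteq> y}"
    using False by simp
  from SUP_upper[OF this, of "\<lambda>p. ereal (nn (a (fst p) - a (snd p)) / dist (fst p) (snd p))"]
  have "ereal (nn (a x - a y) / dist x y) \<le> lip_n nn a"
    unfolding lip_n_def by simp
  then have "nn (a x - a y) / dist x y \<le> 1"
    using lip order_trans by fastforce
  then have "nn (a x - a y) \<le> dist x y"
    using False by (simp add: divide_le_eq)
  then have "N * nn (a x - a y) \<le> N * diam_X TYPE('x)"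
    using dist_le_diam_X[OF cpt, of x y] N(2) by (simp add: mult_left_mono)
  then show ?thesis
    using N(1)[of "a x - a y"] by linarith
qed

lemma le_of_Inf_image_le:
  fixes f :: "'b \<Rightarrow> real"
  assumes "S \<noteq> {}" "\<And>s. s \<in> S \<Longrightarrow> B \<le> c * f s + K" "0 < c" "Inf (f ` S) \<le> r"
  shows "B \<le> c * r + K"
proof -
  have "(B - K) / c \<le> Inf (f ` S)"
  proof (rule cInf_greatest)
    show "f ` S \<noteq> {}"
      using assms(1) by simp
    show "(B - K) / c \<le> y" if "y \<in> f ` S" for y
      using that assms(2) assms(3) by (force simp: pos_divide_le_eq mult.commute)
  qed
  then have "B - K \<le> c * Inf (f ` S)"
    using assms(3) by (simp add: pos_divide_le_eq mult.commute)
  also have "\<dots> \<le> c * r"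
    using assms(3,4) by simp
  finally show ?thesis
    by simp
qed

lemma SUP_mk_le:
  fixes L :: "('x::metric_space \<Rightarrow> 'a::cstar_algebra) \<Rightarrow> ereal"
  assumes "\<And>\<mu> \<nu> a. is_state \<mu> \<Longrightarrow> is_state \<nu> \<Longrightarrow> continuous_on UNIV a \<Longrightarrow> (\<And>x. star (a x) = a x)
     \<Longrightarrow> L a \<le> 1 \<Longrightarrow> cmod (\<mu> a - \<nu> a) \<le> B"
  shows "(SUP \<mu>\<nu> \<in> {\<mu>::('x \<Rightarrow> 'a) \<Rightarrow> complex. is_state \<mu>} \<times> {\<nu>. is_state \<nu>}. mk L (fst \<mu>\<nu>) (snd \<mu>\<nu>))
    \<le> ereal B"
  unfolding mk_def using assms by (force simp: fstar_def fun_eq_iff intro!: SUP_least)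

lemma SUP_mk_L_CX_le:
  fixes nn :: "'a::cstar_algebra \<Rightarrow> real"
  assumes cpt: "compact (UNIV :: 'x::metric_space set)"
    and N: "\<And>v. norm v \<le> N * nn v" "0 \<le> N"
  shows "(SUP \<mu>\<nu> \<in> {\<mu>::('x \<Rightarrow> 'a) \<Rightarrow> complex. is_state \<mu>} \<times> {\<nu>. is_state \<nu>}. mk (L_CX nn) (fst \<mu>\<nu>) (snd \<mu>\<nu>))
    \<le> ereal (2 + N * diam_X TYPE('x))"
proof (rule SUP_mk_le)
  fix \<mu> \<nu> :: "('x \<Rightarrow> 'a) \<Rightarrow> complex" and a :: "'x \<Rightarrow> 'a"
  assume st: "is_state \<mu>" "is_state \<nu>" and ca: "continuous_on UNIV a"
    and sa: "\<And>x. star (a x) = a x" and L: "L_CX nn a \<le> 1"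
  define d where "d b = supnorm (\<lambda>x. a x - b x)" for b :: "'x \<Rightarrow> 'a"
  have "lip_n nn a \<le> 1" and inf: "Inf (d ` scalar_fun_set) \<le> 1"
    using L by (simp_all add: L_CX_def d_def)
  then have osc: "norm (a x - a y) \<le> N * diam_X TYPE('x)" for x y
    using norm_diff_le_of_lip_n[OF cpt _ N] by blast
  have "(\<lambda>x. cscale 0 1) \<in> (scalar_fun_set :: ('x \<Rightarrow> 'a) set)"
    by (auto simp: scalar_fun_set_def)
  moreover have "cmod (\<mu> a - \<nu> a) \<le> 2 * d b + N * diam_X TYPE('x)" if b: "b \<in> scalar_fun_set" for b
  proof (rule state_diff_le_of_scalar_approx[OF cpt st ca sa b _ osc])
    show "norm (a x - b x) \<le> d b" for x
      unfolding d_def using b ca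
      by (intro norm_le_supnorm[OF cpt] continuous_intros) (simp_all add: scalar_fun_set_def)
  qed
  ultimately show "cmod (\<mu> a - \<nu> a) \<le> 2 + N * diam_X TYPE('x)"
    using le_of_Inf_image_le[OF _ _ _ inf, of "cmod (\<mu> a - \<nu> a)" 2] by auto
qed

lemma SUP_mk_L_CX_le_of_scalar_algebra:
  fixes nn :: "'a::cstar_algebra \<Rightarrow> real"
  assumes cpt: "compact (UNIV :: 'x::metric_space set)"
    and N: "\<And>v. norm v \<le> N * nn v" "0 \<le> N" and scalar: "\<And>v::'a. \<exists>c. v = cscale c 1"
  shows "(SUP \<mu>\<nu> \<in> {\<mu>::('x \<Rightarrow> 'a) \<Rightarrow> complex. is_state \<mu>} \<times> {\<nu>. is_state \<nu>}. mk (L_CX nn) (fst \<mu>\<nu>) (snd \<mu>\<nu>))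
    \<le> ereal (N * diam_X TYPE('x))"
proof (rule SUP_mk_le)
  fix \<mu> \<nu> :: "('x \<Rightarrow> 'a) \<Rightarrow> complex" and a :: "'x \<Rightarrow> 'a"
  assume st: "is_state \<mu>" "is_state \<nu>" and ca: "continuous_on UNIV a"
    and sa: "\<And>x. star (a x) = a x" and L: "L_CX nn a \<le> 1"
  have "lip_n nn a \<le> 1"
    using L by (simp add: L_CX_def)
  then have osc: "norm (a x - a y) \<le> N * diam_X TYPE('x)" for x y
    using norm_diff_le_of_lip_n[OF cpt _ N] by blast
  have "a \<in> scalar_fun_set"
    using ca scalar by (auto simp: scalar_fun_set_def)
  then have "cmod (\<mu> a - \<nu> a) \<le> 2 * 0 + N * diam_X TYPE('x)"
    by (rule state_diff_le_of_scalar_approx[OF cpt st ca sa _ _ osc]) simp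
  then show "cmod (\<mu> a - \<nu> a) \<le> N * diam_X TYPE('x)"
    by simp
qed

lemma SUP_mk_L_C_le:
  fixes nn :: "'a::cstar_algebra \<Rightarrow> real"
  assumes cpt: "compact (UNIV :: 'x::metric_space set)"
  shows "(SUP \<mu>\<nu> \<in> {\<mu>::('x \<Rightarrow> 'a) \<Rightarrow> complex. is_state \<mu>} \<times> {\<nu>. is_state \<nu>}. mk (L_C nn) (fst \<mu>\<nu>) (snd \<mu>\<nu>))
    \<le> ereal 2"
proof (rule SUP_mk_le)
  fix \<mu> \<nu> :: "('x \<Rightarrow> 'a) \<Rightarrow> complex" and a :: "'x \<Rightarrow> 'a"
  assume st: "is_state \<mu>" "is_state \<nu>" and ca: "continuous_on UNIV a"
    and sa: "\<And>x. star (a x) = a x" and L: "L_C nn a \<le> 1"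
  define d where "d c = supnorm (\<lambda>x. a x - cscale c 1)" for c
  have inf: "Inf (range d) \<le> 1"
    using L by (simp add: L_C_def d_def)
  have "cmod (\<mu> a - \<nu> a) \<le> 2 * d c + 0" for c
  proof -
    have "norm (a x - cscale c 1) \<le> d c" for x
      unfolding d_def using ca by (intro norm_le_supnorm[OF cpt] continuous_intros)
    then show ?thesis
      using state_diff_le_of_near_scalar[OF st ca sa] by (metis add_0_right)
  qed
  then show "cmod (\<mu> a - \<nu> a) \<le> 2"
    using le_of_Inf_image_le[OF _ _ _ inf, of "cmod (\<mu> a - \<nu> a)" 2 0] by simp
qed

lemma SUP_mk_L_phi_le:
  fixes nn :: "'a::cstar_algebra \<Rightarrow> real" and \<phi> :: "('x::metric_space \<Rightarrow> 'a) \<Rightarrow> complex"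
  assumes cpt: "compact (UNIV :: 'x set)"
  shows "(SUP \<mu>\<nu> \<in> {\<mu>::('x \<Rightarrow> 'a) \<Rightarrow> complex. is_state \<mu>} \<times> {\<nu>. is_state \<nu>}. mk (L_phi nn \<phi>) (fst \<mu>\<nu>) (snd \<mu>\<nu>))
    \<le> ereal 2"
proof (rule SUP_mk_le)
  fix \<mu> \<nu> :: "('x \<Rightarrow> 'a) \<Rightarrow> complex" and a :: "'x \<Rightarrow> 'a"
  assume st: "is_state \<mu>" "is_state \<nu>" and ca: "continuous_on UNIV a"
    and sa: "\<And>x. star (a x) = a x" and L: "L_phi nn \<phi> a \<le> 1"
  have "norm (a x - cscale (\<phi> a) 1) \<le> 1" for x
    using norm_le_supnorm[OF cpt, of "\<lambda>x. a x - cscale (\<phi> a) 1" x] L ca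
    by (force simp: L_phi_def intro: continuous_intros)
  then show "cmod (\<mu> a - \<nu> a) \<le> 2"
    using state_diff_le_of_near_scalar[OF st ca sa] by fastforce
qed

theorem proposition2p10:
  fixes \<phi> :: "('x::metric_space \<Rightarrow> 'a::cstar_algebra) \<Rightarrow> complex"
    and nn :: "'a \<Rightarrow> real" and M N :: real
  assumes "compact (UNIV :: 'x set)"
    and "is_state \<phi>"
    and "is_norm_on nn"
    and "M > 0" and "N > 0"
    and "\<forall>a. M * nn a \<le> norm a \<and> norm a \<le> N * nn a"
  shows "((SUP \<mu>\<nu> \<in> {\<mu>::('x \<Rightarrow> 'a) \<Rightarrow> complex. is_state \<mu>} \<times> {\<nu>. is_state \<nu>}. mk (L_CX nn) (fst \<mu>\<nu>) (snd \<mu>\<nu>))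
           \<le> ereal (2 + N * diam_X TYPE('x))) \<and>
         ((\<forall>a::'a. \<exists>c. a = cscale c 1) \<longrightarrow>
         (SUP \<mu>\<nu> \<in> {\<mu>::('x \<Rightarrow> 'a) \<Rightarrow> complex. is_state \<mu>} \<times> {\<nu>. is_state \<nu>}. mk (L_CX nn) (fst \<mu>\<nu>) (snd \<mu>\<nu>))
           \<le> ereal (N * diam_X TYPE('x))) \<and>
         ((SUP \<mu>\<nu> \<in> {\<mu>::('x \<Rightarrow> 'a) \<Rightarrow> complex. is_state \<mu>} \<times> {\<nu>. is_state \<nu>}. mk (L_C nn) (fst \<mu>\<nu>) (snd \<mu>\<nu>))
           \<le> ereal 2) \<and>
         ((SUP \<mu>\<nu> \<in> {\<mu>::('x \<Rightarrow> 'a) \<Rightarrow> complex. is_state \<mu>} \<times> {\<nu>. is_state \<nu>}. mk (L_phi nn \<phi>) (fst \<mu>\<nu>) (snd \<mu>\<nu>))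
           \<le> ereal 2)"
proof -
  have N: "\<And>v. norm v \<le> N * nn v" "0 \<le> N"
    using assms(5,6) by auto
  show ?thesis
    using SUP_mk_L_CX_le[OF assms(1) N] SUP_mk_L_CX_le_of_scalar_algebra[OF assms(1) N]
      SUP_mk_L_C_le[OF assms(1)] SUP_mk_L_phi_le[OF assms(1)] by blast
qed

end
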